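(* Let $|\psi_{L_3}\rangle$ be the 3-qubit linear cluster state, subjected to independent local depolarizing noise $\mathcal{E}_p^i(\rho)=(1-p)\rho+\frac p3(X_i\rho X_i+Y_i\rho Y_i+Z_i\rho Z_i)$ on each qubit $i$. If $$27-126p+156p^2-64p^3\le 0,$$ (i.e. $p$ is at least approximately $0.332$), then the resulting state cannot be purified to $|\psi_{L_3}\rangle$ by any protocol. For the 2-qubit case (a Bell pair under the same noise), purification is possible iff $(1-p)^2+p^2/3>1/2$.
   Context: Graph state $|\psi_G\rangle$: common $+1$ eigenstate of $K_i=X_i\prod_{\{i,j\}\in E_G}Z_j$; the linear cluster state is the graph state of a path graph. Purification: each qubit held by a distinct party holding that qubit from arbitrarily many copies; using SLOCC they must produce the target pure state with fidelity arbitrarily close to 1. Known input: a two-qubit Bell-diagonal state with weight $\lambda_{00}$ on the target Bell state is purifiable iff $\lambda_{00}>1/2$. *)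

theory Defs
  imports Complex_Main
begin

text \<open>An n-qubit computational basis index is a bit string x :: nat => bool with
  x i = False for i >= n (qubit i carries the bit x i).\<close>

definition qbits :: "nat \<Rightarrow> (nat \<Rightarrow> bool) set" where
  "qbits n = {x. \<forall>i. n \<le> i \<longrightarrow> \<not> x i}"

type_synonym vec = "(nat \<Rightarrow> bool) \<Rightarrow> complex"
type_synonym op = "(nat \<Rightarrow> bool) \<Rightarrow> (nat \<Rightarrow> bool) \<Rightarrow> complex"
type_synonym qop = "bool \<Rightarrow> bool \<Rightarrow> complex"

definition normalized :: "nat \<Rightarrow> vec \<Rightarrow> bool" where
  "normalized n \<psi> \<longleftrightarrow> (\<Sum>x\<in>qbits n. (cmod (\<psi> x))\<^sup>2) = 1"

definition proj :: "vec \<Rightarrow> op" where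
  "proj \<psi> x x' = \<psi> x * cnj (\<psi> x')"

subsection \<open>Pauli matrices (rows/columns indexed by False = |0>, True = |1>)\<close>

definition pauliX :: qop where
  "pauliX a b = (if a \<noteq> b then 1 else 0)"
definition pauliY :: qop where
  "pauliY a b = (if a = b then 0 else if a then \<i> else - \<i>)"
definition pauliZ :: qop where
  "pauliZ a b = (if a = b then (if a then -1 else 1) else 0)"

text \<open>Conjugation of an n-qubit operator by a single-qubit operator P acting on qubit i:
  P_i rho P_i^dagger.\<close>
definition local_conj :: "qop \<Rightarrow> nat \<Rightarrow> op \<Rightarrow> op" where
  "local_conj P i \<rho> x x' =
     (\<Sum>a\<in>(UNIV::bool set). \<Sum>b\<in>(UNIV::bool set).
        P (x i) a * \<rho> (x(i := a)) (x'(i := b)) * cnj (P (x' i) b))"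

definition depol :: "real \<Rightarrow> nat \<Rightarrow> op \<Rightarrow> op" where
  "depol p i \<rho> x x' =
     complex_of_real (1 - p) * \<rho> x x'
     + complex_of_real (p / 3) * (local_conj pauliX i \<rho> x x' + local_conj pauliY i \<rho> x x'
                                 + local_conj pauliZ i \<rho> x x')"

fun depol_all :: "real \<Rightarrow> nat \<Rightarrow> op \<Rightarrow> op" where
  "depol_all p 0 \<rho> = \<rho>"
| "depol_all p (Suc i) \<rho> = depol p i (depol_all p i \<rho>)"

text \<open>Graph given by a symmetric edge predicate E on vertices 0..n-1.
  (K_i psi)(x) for K_i = X_i prod_{j ~ i} Z_j.\<close>
definition stab_gen :: "(nat \<Rightarrow> nat \<Rightarrow> bool) \<Rightarrow> nat \<Rightarrow> nat \<Rightarrow> vec \<Rightarrow> vec" where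
  "stab_gen E n i \<psi> x =
     (\<Prod>j\<in>{j. j < n \<and> E i j}. if x j then -1 else 1) * \<psi> (x(i := \<not> x i))"

definition is_graph_state :: "(nat \<Rightarrow> nat \<Rightarrow> bool) \<Rightarrow> nat \<Rightarrow> vec \<Rightarrow> bool" where
  "is_graph_state E n \<psi> \<longleftrightarrow> normalized n \<psi> \<and>
     (\<forall>i<n. \<forall>x\<in>qbits n. stab_gen E n i \<psi> x = \<psi> x)"

definition path_graph :: "nat \<Rightarrow> nat \<Rightarrow> bool" where
  "path_graph i j \<longleftrightarrow> i + 1 = j \<or> j + 1 = i"

definition bell :: vec where
  "bell x = (if x 0 = x 1 then complex_of_real (1 / sqrt 2) else 0)"

text \<open>k copies of an n-qubit state: index y with y j = basis index of copy j.\<close>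
definition cfgs :: "nat \<Rightarrow> nat \<Rightarrow> (nat \<Rightarrow> nat \<Rightarrow> bool) set" where
  "cfgs n k = {y. \<forall>j. (j < k \<longrightarrow> y j \<in> qbits n) \<and> (k \<le> j \<longrightarrow> y j = (\<lambda>_. False))}"

definition tpow :: "op \<Rightarrow> nat \<Rightarrow> (nat \<Rightarrow> nat \<Rightarrow> bool) \<Rightarrow> (nat \<Rightarrow> nat \<Rightarrow> bool) \<Rightarrow> complex" where
  "tpow \<rho> k y y' = (\<Prod>j<k. \<rho> (y j) (y' j))"

text \<open>Register of party i: its qubits from all copies (bit of copy j).\<close>
definition reg :: "(nat \<Rightarrow> nat \<Rightarrow> bool) \<Rightarrow> nat \<Rightarrow> (nat \<Rightarrow> bool)" where
  "reg y i = (\<lambda>j. y j i)"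

text \<open>A SLOCC (separable) operation: finitely many branches r < m, each a product Kraus
  operator A r 0 \<otimes> ... \<otimes> A r (n-1), where A r i maps party i's k-qubit register to
  one qubit (A r i b z = matrix entry <b| A |z>).\<close>
definition kraus_el :: "nat \<Rightarrow> (nat \<Rightarrow> nat \<Rightarrow> bool \<Rightarrow> (nat \<Rightarrow> bool) \<Rightarrow> complex)
      \<Rightarrow> nat \<Rightarrow> (nat \<Rightarrow> bool) \<Rightarrow> (nat \<Rightarrow> nat \<Rightarrow> bool) \<Rightarrow> complex" where
  "kraus_el n A r x y = (\<Prod>i<n. A r i (x i) (reg y i))"

definition slocc_out :: "nat \<Rightarrow> nat \<Rightarrow> nat \<Rightarrow> (nat \<Rightarrow> nat \<Rightarrow> bool \<Rightarrow> (nat \<Rightarrow> bool) \<Rightarrow> complex)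
      \<Rightarrow> op \<Rightarrow> op" where
  "slocc_out n k m A \<rho> x x' =
     (\<Sum>r<m. \<Sum>y\<in>cfgs n k. \<Sum>y'\<in>cfgs n k.
        kraus_el n A r x y * tpow \<rho> k y y' * cnj (kraus_el n A r x' y'))"

definition trace_op :: "nat \<Rightarrow> op \<Rightarrow> complex" where
  "trace_op n \<sigma> = (\<Sum>x\<in>qbits n. \<sigma> x x)"

definition overlap :: "nat \<Rightarrow> vec \<Rightarrow> op \<Rightarrow> complex" where
  "overlap n \<psi> \<sigma> = (\<Sum>x\<in>qbits n. \<Sum>x'\<in>qbits n. cnj (\<psi> x) * \<sigma> x x' * \<psi> x')"

definition purifiable :: "nat \<Rightarrow> op \<Rightarrow> vec \<Rightarrow> bool" where
  "purifiable n \<rho> \<psi> \<longleftrightarrow>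
     (\<forall>\<epsilon>>0. \<exists>k m A. 0 < k \<and>
        0 < Re (trace_op n (slocc_out n k m A \<rho>)) \<and>
        Re (overlap n \<psi> (slocc_out n k m A \<rho>)) \<ge> (1 - \<epsilon>) * Re (trace_op n (slocc_out n k m A \<rho>)))"

end

theory Submission
  imports Defs "HOL-Library.FuncSet"
begin

(* Both impossibility results rest on positivity of the partial transpose with respect to party 0.
   Transposing party 0 commutes with a product Kraus operator once that party's factor is complex
   conjugated, so SLOCC maps states with positive partial transpose (PPT) to PPT states.  For each
   target state psi the operator 1 - 2|psi><psi| has a positive partial transpose, hence every PPT
   state has fidelity at most 1/2 with psi.  The noisy Bell pair is PPT when its fidelity F is at
   most 1/2, and the noisy three-qubit cluster state is PPT under the cubic condition.

   For F > 1/2 each party projects blocks of b copies onto span {|0...0>, |1...1>} and outputs the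
   parity of a such blocks.  With q = (1 - F)/3 the weight of each of the other Bell states, the
   repetition step makes the bit-flip weight q^b negligible against the coherence ((F - q)/2)^b,
   which needs q < (F - q)/2, i.e. F > 1/2; the parity step then drives the phase errors to zero
   while the bit flips accumulate only linearly in a. *)

section \<open>Partial transposition and SLOCC\<close>

type_synonym cfg = "nat \<Rightarrow> nat \<Rightarrow> bool"
type_synonym kraus_ops = "nat \<Rightarrow> nat \<Rightarrow> bool \<Rightarrow> (nat \<Rightarrow> bool) \<Rightarrow> complex"

lemma finite_qbits: "finite (qbits n)"
proof (rule finite_subset)
  show "qbits n \<subseteq> (\<lambda>S i. i \<in> S) ` Pow {..<n}"
  proof
    fix x assume "x \<in> qbits n"
    then have "x = (\<lambda>i. i \<in> {i. x i})" and "{i. x i} \<in> Pow {..<n}"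
      by (auto simp: qbits_def not_le[symmetric])
    then show "x \<in> (\<lambda>S i. i \<in> S) ` Pow {..<n}" by blast
  qed
qed simp

lemma finite_cfgs: "finite (cfgs n k)"
proof (rule finite_subset)
  let ?ext = "\<lambda>f j. if j < k then f j else (\<lambda>_. False)"
  show "cfgs n k \<subseteq> ?ext ` PiE {..<k} (\<lambda>_. qbits n)"
  proof
    fix y assume y: "y \<in> cfgs n k"
    then have "y = ?ext (restrict y {..<k})" and "restrict y {..<k} \<in> PiE {..<k} (\<lambda>_. qbits n)"
      by (auto simp: cfgs_def fun_eq_iff)
    then show "y \<in> ?ext ` PiE {..<k} (\<lambda>_. qbits n)" by blast
  qed
qed (auto intro: finite_PiE finite_qbits)

definition ptrans :: "op \<Rightarrow> op" where
  "ptrans \<sigma> x x' = \<sigma> (x(0 := x' 0)) (x'(0 := x 0))"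

definition quad_form :: "nat \<Rightarrow> op \<Rightarrow> vec \<Rightarrow> complex" where
  "quad_form n M v = (\<Sum>x\<in>qbits n. \<Sum>x'\<in>qbits n. cnj (v x) * M x x' * v x')"

definition ppt :: "nat \<Rightarrow> op \<Rightarrow> bool" where
  "ppt n \<sigma> \<longleftrightarrow> (\<forall>v. 0 \<le> Re (quad_form n (ptrans \<sigma>) v))"

definition rank_one_sum :: "'l set \<Rightarrow> ('l \<Rightarrow> real) \<Rightarrow> ('l \<Rightarrow> 'x \<Rightarrow> complex) \<Rightarrow> 'x \<Rightarrow> 'x \<Rightarrow> complex" where
  "rank_one_sum I c g x x' = (\<Sum>l\<in>I. complex_of_real (c l) * g l x * cnj (g l x'))"

lemma quad_form_rank_one_sum:
  "quad_form n (rank_one_sum I c g) v =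
     complex_of_real (\<Sum>l\<in>I. c l * (cmod (\<Sum>x\<in>qbits n. cnj (v x) * g l x))\<^sup>2)"
proof -
  let ?s = "\<lambda>l. \<Sum>x\<in>qbits n. cnj (v x) * g l x"
  let ?t = "\<lambda>l x x'. complex_of_real (c l) * (cnj (v x) * g l x) * cnj (cnj (v x') * g l x')"
  have "quad_form n (rank_one_sum I c g) v = (\<Sum>x\<in>qbits n. \<Sum>x'\<in>qbits n. \<Sum>l\<in>I. ?t l x x')"
    unfolding quad_form_def rank_one_sum_def
    by (simp add: sum_distrib_left sum_distrib_right mult_ac)
  also have "\<dots> = (\<Sum>x\<in>qbits n. \<Sum>l\<in>I. \<Sum>x'\<in>qbits n. ?t l x x')"
    by (rule sum.cong[OF refl], rule sum.swap)
  also have "\<dots> = (\<Sum>l\<in>I. \<Sum>x\<in>qbits n. \<Sum>x'\<in>qbits n. ?t l x x')"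
    by (rule sum.swap)
  also have "\<dots> = (\<Sum>l\<in>I. complex_of_real (c l) * ?s l * cnj (?s l))"
    by (intro sum.cong refl) (simp add: sum_distrib_left sum_distrib_right mult.assoc, rule sum.swap)
  also have "\<dots> = complex_of_real (\<Sum>l\<in>I. c l * (cmod (?s l))\<^sup>2)"
    by (simp only: of_real_sum of_real_mult mult.assoc complex_norm_square)
  finally show ?thesis .
qed

lemma quad_form_rank_one_sum_nonneg:
  "\<forall>l\<in>I. 0 \<le> c l \<Longrightarrow> 0 \<le> Re (quad_form n (rank_one_sum I c g) v)"
  by (simp add: quad_form_rank_one_sum sum_nonneg)

lemma tpow_rank_one_sum:
  assumes "finite I" and "\<forall>u\<in>qbits n. \<forall>u'\<in>qbits n. \<sigma> u u' = rank_one_sum I c g u u'"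
    and "y \<in> cfgs n k" and "y' \<in> cfgs n k"
  shows "tpow \<sigma> k y y' = rank_one_sum (PiE {..<k} (\<lambda>_. I)) (\<lambda>L. \<Prod>j<k. c (L j))
      (\<lambda>L y. \<Prod>j<k. g (L j) (y j)) y y'"
proof -
  have "tpow \<sigma> k y y' = (\<Prod>j<k. \<Sum>l\<in>I. complex_of_real (c l) * g l (y j) * cnj (g l (y' j)))"
    unfolding tpow_def using assms(2-4) by (intro prod.cong refl) (auto simp: cfgs_def rank_one_sum_def)
  also have "\<dots> = (\<Sum>L\<in>PiE {..<k} (\<lambda>_. I). \<Prod>j<k. complex_of_real (c (L j)) * g (L j) (y j) * cnj (g (L j) (y' j)))"
    by (rule prod_sum_PiE[where f = "\<lambda>j l. complex_of_real (c l) * g l (y j) * cnj (g l (y' j))"])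
      (simp_all add: assms(1))
  finally show ?thesis
    by (simp add: rank_one_sum_def prod.distrib cnj_prod)
qed

lemma slocc_out_rank_one_sum:
  assumes "finite I" and "\<forall>u\<in>qbits n. \<forall>u'\<in>qbits n. \<sigma> u u' = rank_one_sum I c g u u'"
  shows "slocc_out n k m A \<sigma> = rank_one_sum ({..<m} \<times> PiE {..<k} (\<lambda>_. I)) (\<lambda>(r, L). \<Prod>j<k. c (L j))
      (\<lambda>(r, L) x. \<Sum>y\<in>cfgs n k. kraus_el n A r x y * (\<Prod>j<k. g (L j) (y j)))"
proof (intro ext)
  fix x x'
  let ?P = "PiE {..<k} (\<lambda>_. I)"
  let ?C = "\<lambda>L. \<Prod>j<k. c (L j)"
  let ?f = "\<lambda>r L x y. kraus_el n A r x y * (\<Prod>j<k. g (L j) (y j))"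
  have "slocc_out n k m A \<sigma> x x' = (\<Sum>r<m. \<Sum>y\<in>cfgs n k. \<Sum>y'\<in>cfgs n k. \<Sum>L\<in>?P.
      complex_of_real (?C L) * ?f r L x y * cnj (?f r L x' y'))"
    unfolding slocc_out_def
    by (intro sum.cong refl)
      (simp add: tpow_rank_one_sum[OF assms] rank_one_sum_def sum_distrib_left sum_distrib_right mult_ac)
  also have "\<dots> = (\<Sum>r<m. \<Sum>L\<in>?P. \<Sum>y\<in>cfgs n k. \<Sum>y'\<in>cfgs n k.
      complex_of_real (?C L) * ?f r L x y * cnj (?f r L x' y'))"
    by (intro sum.cong refl) (simp add: sum.swap[where B = ?P])
  also have "\<dots> = (\<Sum>r<m. \<Sum>L\<in>?P. complex_of_real (?C L)
      * (\<Sum>y\<in>cfgs n k. ?f r L x y) * cnj (\<Sum>y'\<in>cfgs n k. ?f r L x' y'))"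
    by (simp only: cnj_sum sum_distrib_left sum_distrib_right mult.assoc)
      (rule sum.cong[OF refl], rule sum.cong[OF refl], rule sum.swap)
  finally show "slocc_out n k m A \<sigma> x x' = rank_one_sum ({..<m} \<times> ?P) (\<lambda>(r, L). ?C L)
      (\<lambda>(r, L) x. \<Sum>y\<in>cfgs n k. ?f r L x y) x x'"
    by (simp add: rank_one_sum_def sum.cartesian_product split_def)
qed

definition swap0 :: "cfg \<Rightarrow> cfg \<Rightarrow> cfg" where
  "swap0 y y' = (\<lambda>j. (y j)(0 := y' j 0))"

lemma swap0_swap0: "swap0 (swap0 y y') (swap0 y' y) = y"
  by (auto simp: swap0_def fun_eq_iff)

lemma swap0_cfgs: "y \<in> cfgs n k \<Longrightarrow> y' \<in> cfgs n k \<Longrightarrow> swap0 y y' \<in> cfgs n k"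
  by (auto simp: swap0_def cfgs_def qbits_def)

lemma tpow_ptrans: "tpow (ptrans \<rho>) k y y' = tpow \<rho> k (swap0 y y') (swap0 y' y)"
  by (simp add: tpow_def ptrans_def swap0_def)

lemma sum_cfgs_swap0:
  "(\<Sum>y\<in>cfgs n k. \<Sum>y'\<in>cfgs n k. f y y') =
     (\<Sum>y\<in>cfgs n k. \<Sum>y'\<in>cfgs n k. f (swap0 y y') (swap0 y' y))"
proof -
  have "(\<Sum>y\<in>cfgs n k. \<Sum>y'\<in>cfgs n k. f y y') = (\<Sum>(y, y')\<in>cfgs n k \<times> cfgs n k. f y y')"
    by (simp add: sum.cartesian_product)
  also have "\<dots> = (\<Sum>(y, y')\<in>cfgs n k \<times> cfgs n k. f (swap0 y y') (swap0 y' y))"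
    by (rule sum.reindex_bij_witness[where i = "\<lambda>(y, y'). (swap0 y y', swap0 y' y)"
          and j = "\<lambda>(y, y'). (swap0 y y', swap0 y' y)"]) (auto simp: swap0_swap0 swap0_cfgs)
  also have "\<dots> = (\<Sum>y\<in>cfgs n k. \<Sum>y'\<in>cfgs n k. f (swap0 y y') (swap0 y' y))"
    by (simp add: sum.cartesian_product)
  finally show ?thesis .
qed

definition conj_party0 :: "kraus_ops \<Rightarrow> kraus_ops" where
  "conj_party0 A r i = (if i = 0 then (\<lambda>t z. cnj (A r 0 t z)) else A r i)"

lemma kraus_el_split0:
  "0 < n \<Longrightarrow> kraus_el n A r x y = A r 0 (x 0) (reg y 0) * (\<Prod>i\<in>{1..<n}. A r i (x i) (reg y i))"
  by (simp add: kraus_el_def lessThan_atLeast0 prod.atLeast_Suc_lessThan)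

(* Reindexing the copy configurations by swap0 moves the transposition from the output to the input. *)
lemma ptrans_slocc_out:
  assumes "0 < n"
  shows "ptrans (slocc_out n k m A \<rho>) = slocc_out n k m (conj_party0 A) (ptrans \<rho>)"
proof (intro ext)
  fix x x'
  have rest: "(\<Prod>i\<in>{1..<n}. B i ((x(0 := v)) i) (reg (swap0 y y') i)) = (\<Prod>i\<in>{1..<n}. B i (x i) (reg y i))"
    for B :: "nat \<Rightarrow> bool \<Rightarrow> (nat \<Rightarrow> bool) \<Rightarrow> complex" and x v y y'
    by (intro prod.cong) (auto simp: reg_def swap0_def)
  have "ptrans (slocc_out n k m A \<rho>) x x' = (\<Sum>r<m. \<Sum>y\<in>cfgs n k. \<Sum>y'\<in>cfgs n k.
      kraus_el n A r (x(0 := x' 0)) (swap0 y y') * tpow \<rho> k (swap0 y y') (swap0 y' y)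
      * cnj (kraus_el n A r (x'(0 := x 0)) (swap0 y' y)))"
    unfolding ptrans_def slocc_out_def by (intro sum.cong refl sum_cfgs_swap0)
  also have "\<dots> = slocc_out n k m (conj_party0 A) (ptrans \<rho>) x x'"
    unfolding slocc_out_def tpow_ptrans kraus_el_split0[OF assms]
    by (intro sum.cong refl) (simp add: rest conj_party0_def reg_def swap0_def)
  finally show "ptrans (slocc_out n k m A \<rho>) x x' = slocc_out n k m (conj_party0 A) (ptrans \<rho>) x x'" .
qed

lemma ppt_slocc_out:
  assumes "0 < n" and "finite I" and "\<forall>l\<in>I. 0 \<le> c l"
    and "\<forall>u\<in>qbits n. \<forall>u'\<in>qbits n. ptrans \<rho> u u' = rank_one_sum I c g u u'"
  shows "ppt n (slocc_out n k m A \<rho>)"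
  unfolding ppt_def ptrans_slocc_out[OF assms(1)] slocc_out_rank_one_sum[OF assms(2,4)]
  using assms(3) by (intro allI quad_form_rank_one_sum_nonneg) (auto simp: PiE_iff intro: prod_nonneg)

lemma not_purifiable_if_fidelity_le_half:
  assumes "\<And>k m A. 2 * Re (overlap n \<psi> (slocc_out n k m A \<rho>)) \<le> Re (trace_op n (slocc_out n k m A \<rho>))"
  shows "\<not> purifiable n \<rho> \<psi>"
proof
  assume "purifiable n \<rho> \<psi>"
  then obtain k m A where tr: "0 < Re (trace_op n (slocc_out n k m A \<rho>))"
    and fid: "3/4 * Re (trace_op n (slocc_out n k m A \<rho>)) \<le> Re (overlap n \<psi> (slocc_out n k m A \<rho>))"
    unfolding purifiable_def by (elim allE[of _ "1/4"]) auto
  from tr fid assms[of k m A] show False by linarith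
qed

lemma sum_UNIV_bool: "(\<Sum>a\<in>(UNIV :: bool set). f a) = f True + f False"
  by (simp add: UNIV_bool add.commute)

lemma sum_UNIV_bool2:
  "(\<Sum>z\<in>(UNIV :: (bool \<times> bool) set). f z) =
     f (False, False) + f (False, True) + f (True, False) + f (True, True)"
proof -
  have UNIV_eq: "(UNIV :: (bool \<times> bool) set) = {(False, False), (False, True), (True, False), (True, True)}"
    by auto
  show ?thesis by (subst UNIV_eq) (simp add: add_ac)
qed

lemma sum_UNIV_bool3:
  "(\<Sum>z\<in>(UNIV :: (bool \<times> bool \<times> bool) set). f z) =
     f (False, False, False) + f (False, False, True) + f (False, True, False) + f (False, True, True) +
     f (True, False, False) + f (True, False, True) + f (True, True, False) + f (True, True, True)"
proof -
  have UNIV_eq: "(UNIV :: (bool \<times> bool \<times> bool) set) = {(False, False, False), (False, False, True),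
      (False, True, False), (False, True, True), (True, False, False), (True, False, True),
      (True, True, False), (True, True, True)}"
    by auto
  show ?thesis by (subst UNIV_eq) (simp add: add_ac)
qed

definition bits2 :: "bool \<Rightarrow> bool \<Rightarrow> nat \<Rightarrow> bool" where
  "bits2 a b = (\<lambda>i. if i = 0 then a else if i = 1 then b else False)"

definition bits3 :: "bool \<Rightarrow> bool \<Rightarrow> bool \<Rightarrow> nat \<Rightarrow> bool" where
  "bits3 a b c = (\<lambda>i. if i = 0 then a else if i = 1 then b else if i = 2 then c else False)"

lemma bits2_apply [simp]: "bits2 a b 0 = a" "bits2 a b (Suc 0) = b" "bits2 a b 1 = b"
  by (simp_all add: bits2_def)

lemma bits3_apply [simp]: "bits3 a b c 0 = a" "bits3 a b c (Suc 0) = b" "bits3 a b c 1 = b" "bits3 a b c 2 = c"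
  by (simp_all add: bits3_def)

lemma bits2_update [simp]: "(bits2 a b)(0 := v) = bits2 v b" "(bits2 a b)(Suc 0 := v) = bits2 a v"
  by (auto simp: bits2_def fun_eq_iff)

lemma bits3_update [simp]:
  "(bits3 a b c)(0 := v) = bits3 v b c" "(bits3 a b c)(Suc 0 := v) = bits3 a v c" "(bits3 a b c)(2 := v) = bits3 a b v"
  by (auto simp: bits3_def fun_eq_iff)

lemma bits2_in_qbits: "bits2 a b \<in> qbits 2"
  by (simp add: qbits_def bits2_def)

lemma bits3_in_qbits: "bits3 a b c \<in> qbits 3"
  by (simp add: qbits_def bits3_def)

lemma qbits2_bits2: "x \<in> qbits 2 \<Longrightarrow> bits2 (x 0) (x 1) = x"
  by (auto simp: qbits_def bits2_def fun_eq_iff)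

lemma qbits2_eq_iff:
  assumes "x \<in> qbits 2" and "y \<in> qbits 2"
  shows "x = y \<longleftrightarrow> x 0 = y 0 \<and> x 1 = y 1"
proof
  assume "x 0 = y 0 \<and> x 1 = y 1"
  then have "bits2 (x 0) (x 1) = bits2 (y 0) (y 1)"
    by (simp only:)
  then show "x = y"
    by (simp only: qbits2_bits2[OF assms(1)] qbits2_bits2[OF assms(2)])
qed simp

lemma qbits3_bits3: "x \<in> qbits 3 \<Longrightarrow> bits3 (x 0) (x 1) (x 2) = x"
  by (auto simp: qbits_def bits3_def fun_eq_iff)

lemma ball_qbits2: "(\<forall>x\<in>qbits 2. P x) \<longleftrightarrow> (\<forall>a b. P (bits2 a b))"
  by (metis qbits2_bits2 bits2_in_qbits)

lemma ball_qbits3: "(\<forall>x\<in>qbits 3. P x) \<longleftrightarrow> (\<forall>a b c. P (bits3 a b c))"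
  by (metis qbits3_bits3 bits3_in_qbits)

lemma sum_qbits2:
  "(\<Sum>x\<in>qbits 2. f x) = f (bits2 False False) + f (bits2 False True) + f (bits2 True False) + f (bits2 True True)"
proof -
  have "(\<Sum>x\<in>qbits 2. f x) = (\<Sum>z\<in>UNIV. f (bits2 (fst z) (snd z)))"
    by (rule sum.reindex_bij_witness[where i = "\<lambda>z. bits2 (fst z) (snd z)" and j = "\<lambda>x. (x 0, x 1)"])
      (auto simp: bits2_in_qbits qbits2_bits2[unfolded One_nat_def])
  then show ?thesis by (simp add: sum_UNIV_bool2)
qed

lemma sum_qbits3:
  "(\<Sum>x\<in>qbits 3. f x) =
     f (bits3 False False False) + f (bits3 False False True) + f (bits3 False True False) + f (bits3 False True True) +
     f (bits3 True False False) + f (bits3 True False True) + f (bits3 True True False) + f (bits3 True True True)"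
proof -
  have "(\<Sum>x\<in>qbits 3. f x) = (\<Sum>z\<in>UNIV. f (bits3 (fst z) (fst (snd z)) (snd (snd z))))"
    by (rule sum.reindex_bij_witness[where i = "\<lambda>z. bits3 (fst z) (fst (snd z)) (snd (snd z))"
          and j = "\<lambda>x. (x 0, x 1, x 2)"]) (auto simp: bits3_in_qbits qbits3_bits3[unfolded One_nat_def])
  then show ?thesis by (simp add: sum_UNIV_bool3)
qed

lemma local_conj_pauliX: "local_conj pauliX i \<rho> x x' = \<rho> (x(i := \<not> x i)) (x'(i := \<not> x' i))"
  unfolding local_conj_def pauliX_def sum_UNIV_bool
  by (cases "x i"; cases "x' i") simp_all

lemma local_conj_pauliY:
  "local_conj pauliY i \<rho> x x' = (if x i = x' i then 1 else -1) * \<rho> (x(i := \<not> x i)) (x'(i := \<not> x' i))"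
  unfolding local_conj_def pauliY_def sum_UNIV_bool
  by (cases "x i"; cases "x' i") (simp_all add: algebra_simps)

lemma local_conj_pauliZ: "local_conj pauliZ i \<rho> x x' = (if x i = x' i then 1 else -1) * \<rho> x x'"
  unfolding local_conj_def pauliZ_def sum_UNIV_bool
  by (cases "x i"; cases "x' i") (simp_all add: fun_upd_idem)

lemma depol_apply:
  "depol p i \<rho> x x' =
     (if x i = x' i
      then complex_of_real (1 - 2*p/3) * \<rho> x x' + complex_of_real (2*p/3) * \<rho> (x(i := \<not> x i)) (x'(i := \<not> x' i))
      else complex_of_real (1 - 4*p/3) * \<rho> x x')"
  unfolding depol_def local_conj_pauliX local_conj_pauliY local_conj_pauliZ
  by (simp add: algebra_simps)

lemma depol_apply_shrink:
  assumes "\<nu> = 1 - 4*p/3"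
  shows "depol p i \<rho> x x' =
     (if x i = x' i
      then complex_of_real ((1 + \<nu>)/2) * \<rho> x x' + complex_of_real ((1 - \<nu>)/2) * \<rho> (x(i := \<not> x i)) (x'(i := \<not> x' i))
      else complex_of_real \<nu> * \<rho> x x')"
  unfolding depol_apply assms by (simp add: field_simps)

lemma depol_all_2: "depol_all p 2 \<rho> = depol p 1 (depol p 0 \<rho>)"
  by (simp add: numeral_2_eq_2)

lemma depol_all_3: "depol_all p 3 \<rho> = depol p 2 (depol p 1 (depol p 0 \<rho>))"
  by (simp add: numeral_3_eq_3 numeral_2_eq_2)

section \<open>The noisy Bell pair\<close>

definition bell_fidelity :: "real \<Rightarrow> real" where
  "bell_fidelity p = (1 - p)\<^sup>2 + p\<^sup>2 / 3"

definition bell_error :: "real \<Rightarrow> real" where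
  "bell_error p = (1 - bell_fidelity p) / 3"

lemma bell_fidelity_le_1:
  assumes "0 \<le> p" and "p \<le> 1"
  shows "bell_fidelity p \<le> 1"
proof -
  have "(1 - p)\<^sup>2 \<le> 1 - p" and "p\<^sup>2 \<le> p"
    using assms by (simp_all add: power2_eq_square mult_left_le_one_le mult_le_one)
  then show ?thesis
    using assms by (simp add: bell_fidelity_def)
qed

lemma proj_bell: "proj bell (bits2 a b) (bits2 a' b') = (if a = b \<and> a' = b' then 1/2 else 0)"
proof -
  have "complex_of_real (1 / sqrt 2) * complex_of_real (1 / sqrt 2) = complex_of_real (1 / sqrt 2 * (1 / sqrt 2))"
    by (simp only: of_real_mult)
  then show ?thesis
    by (simp add: proj_def bell_def)
qed

lemma noisy_bell_apply:
  "depol_all p 2 (proj bell) (bits2 a b) (bits2 a' b') = complex_of_real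
     ((if a = a' \<and> b = b' then bell_error p else 0)
      + (if a = b \<and> a' = b' then (bell_fidelity p - bell_error p) / 2 else 0))"
  unfolding depol_all_2
  by (cases a; cases b; cases a'; cases b')
    (simp_all add: depol_apply proj_bell bell_error_def bell_fidelity_def field_simps power2_eq_square)

definition singlet :: vec where
  "singlet x = (if x 0 = x 1 then 0 else if x 0 then -1 else 1)"

text \<open>With \<open>F = bell_fidelity p\<close> and \<open>q = bell_error p\<close>, the noisy pair is the Werner state
  \<open>q\<cdot>1 + (F - q)\<cdot>|\<Phi>\<^sup>+\<rangle>\<langle>\<Phi>\<^sup>+|\<close>, whose partial transpose \<open>q\<cdot>1 + (F - q)/2\<cdot>SWAP\<close> is diagonal in
  the basis \<open>|00\<rangle>, |11\<rangle>, |01\<rangle> + |10\<rangle>, |01\<rangle> - |10\<rangle>\<close>.\<close>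

definition bell_pt_vec :: "bool \<times> bool \<Rightarrow> vec" where
  "bell_pt_vec l x = (case l of
      (False, False) \<Rightarrow> (if \<not> x 0 \<and> \<not> x 1 then 1 else 0)
    | (True, True) \<Rightarrow> (if x 0 \<and> x 1 then 1 else 0)
    | (False, True) \<Rightarrow> (if x 0 \<noteq> x 1 then 1 else 0)
    | (True, False) \<Rightarrow> singlet x)"

definition bell_pt_coeff :: "real \<Rightarrow> bool \<times> bool \<Rightarrow> real" where
  "bell_pt_coeff p l =
     (if l = (True, False) then (1 - 2 * bell_fidelity p) / 4
      else if l = (False, True) then (bell_fidelity p + bell_error p) / 4
      else (bell_fidelity p + bell_error p) / 2)"

lemma ptrans_noisy_bell:
  "\<forall>u\<in>qbits 2. \<forall>u'\<in>qbits 2.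
     ptrans (depol_all p 2 (proj bell)) u u' = rank_one_sum UNIV (bell_pt_coeff p) bell_pt_vec u u'"
  unfolding ball_qbits2
proof (intro allI)
  fix a b a' b'
  show "ptrans (depol_all p 2 (proj bell)) (bits2 a b) (bits2 a' b') =
      rank_one_sum UNIV (bell_pt_coeff p) bell_pt_vec (bits2 a b) (bits2 a' b')"
    unfolding ptrans_def rank_one_sum_def sum_UNIV_bool2
    by (cases a; cases b; cases a'; cases b')
      (simp_all add: noisy_bell_apply bell_pt_vec_def bell_pt_coeff_def singlet_def bell_error_def field_simps)
qed

lemma overlap_bell:
  "overlap 2 bell \<sigma> = (\<sigma> (bits2 False False) (bits2 False False) + \<sigma> (bits2 False False) (bits2 True True)
     + \<sigma> (bits2 True True) (bits2 False False) + \<sigma> (bits2 True True) (bits2 True True)) / 2"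
proof -
  have "complex_of_real (1 / sqrt 2) * complex_of_real (1 / sqrt 2) = complex_of_real (1 / sqrt 2 * (1 / sqrt 2))"
    by (simp only: of_real_mult)
  then show ?thesis
    by (simp add: overlap_def sum_qbits2 bell_def algebra_simps add_divide_distrib)
qed

text \<open>The partial transpose of \<open>1 - 2|\<Phi>\<^sup>+\<rangle>\<langle>\<Phi>\<^sup>+|\<close> is \<open>1 - SWAP = 2|\<Psi>\<^sup>-\<rangle>\<langle>\<Psi>\<^sup>-|\<close>.\<close>

lemma bell_witness: "trace_op 2 \<sigma> - 2 * overlap 2 bell \<sigma> = quad_form 2 (ptrans \<sigma>) singlet"
  by (simp add: overlap_bell trace_op_def quad_form_def ptrans_def sum_qbits2 singlet_def field_simps)

lemma ppt_bell_overlap_le: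
  assumes "ppt 2 \<sigma>"
  shows "2 * Re (overlap 2 bell \<sigma>) \<le> Re (trace_op 2 \<sigma>)"
proof -
  have "0 \<le> Re (trace_op 2 \<sigma> - 2 * overlap 2 bell \<sigma>)"
    using assms by (simp only: bell_witness ppt_def)
  then show ?thesis by simp
qed

lemma noisy_bell_not_purifiable:
  assumes "bell_fidelity p \<le> 1/2"
  shows "\<not> purifiable 2 (depol_all p 2 (proj bell)) bell"
proof (rule not_purifiable_if_fidelity_le_half)
  have "0 \<le> bell_fidelity p"
    by (simp add: bell_fidelity_def)
  then have "\<forall>l\<in>UNIV. 0 \<le> bell_pt_coeff p l"
    using assms by (simp add: bell_pt_coeff_def bell_error_def)
  then show "2 * Re (overlap 2 bell (slocc_out 2 k m A (depol_all p 2 (proj bell))))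
      \<le> Re (trace_op 2 (slocc_out 2 k m A (depol_all p 2 (proj bell))))" for k m A
    by (intro ppt_bell_overlap_le ppt_slocc_out[OF _ _ _ ptrans_noisy_bell]) simp_all
qed

section \<open>The noisy linear cluster state\<close>

definition cluster_sign :: "(nat \<Rightarrow> bool) \<Rightarrow> complex" where
  "cluster_sign x = (if (x 0 \<and> x 1) = (x 1 \<and> x 2) then 1 else -1)"

lemma path_graph_neighbours:
  "{j. j < 3 \<and> path_graph 0 j} = {1}" "{j. j < 3 \<and> path_graph (Suc 0) j} = {0, 2}"
  "{j. j < 3 \<and> path_graph 2 j} = {1}"
  by (auto simp: path_graph_def)

lemma cluster_state_amplitude:
  assumes "is_graph_state path_graph 3 \<psi>"
  shows "\<forall>x\<in>qbits 3. \<psi> x = cluster_sign x * \<psi> (bits3 False False False)"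
    and "(cmod (\<psi> (bits3 False False False)))\<^sup>2 = 1/8"
proof -
  have stab: "stab_gen path_graph 3 i \<psi> (bits3 a b c) = \<psi> (bits3 a b c)" if "i < 3" for i a b c
    using assms that bits3_in_qbits by (auto simp: is_graph_state_def)
  have K0: "(if b then -1 else 1) * \<psi> (bits3 (\<not> a) b c) = \<psi> (bits3 a b c)" for a b c
    using stab[of 0 a b c] by (simp add: stab_gen_def path_graph_neighbours)
  have K1: "(if a then -1 else 1) * (if c then -1 else 1) * \<psi> (bits3 a (\<not> b) c) = \<psi> (bits3 a b c)" for a b c
    using stab[of 1 a b c] by (simp add: stab_gen_def path_graph_neighbours)
  have K2: "(if b then -1 else 1) * \<psi> (bits3 a b (\<not> c)) = \<psi> (bits3 a b c)" for a b c
    using stab[of 2 a b c] by (simp add: stab_gen_def path_graph_neighbours)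
  let ?c = "\<psi> (bits3 False False False)"
  have v1: "\<psi> (bits3 True False False) = ?c" using K0[where a = False and b = False and c = False] by simp
  have v2: "\<psi> (bits3 False False True) = ?c" using K2[where a = False and b = False and c = False] by simp
  have v3: "\<psi> (bits3 True False True) = ?c" using K2[where a = True and b = False and c = False] v1 by simp
  have v4: "\<psi> (bits3 False True False) = ?c" using K1[where a = False and b = False and c = False] by simp
  have v5: "\<psi> (bits3 True True False) = - ?c"
    using K0[where a = False and b = True and c = False] v4 by (simp add: minus_equation_iff)
  have v6: "\<psi> (bits3 False True True) = - ?c"
    using K2[where a = False and b = True and c = False] v4 by (simp add: minus_equation_iff)
  have v7: "\<psi> (bits3 True True True) = ?c" using K0[where a = False and b = True and c = True] v6 by simp
  note v = v1 v2 v3 v4 v5 v6 v7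
  show "\<forall>x\<in>qbits 3. \<psi> x = cluster_sign x * ?c"
    unfolding ball_qbits3 by (intro allI) (case_tac a; case_tac b; case_tac c; simp add: v cluster_sign_def)
  have "(\<Sum>x\<in>qbits 3. (cmod (\<psi> x))\<^sup>2) = 1"
    using assms by (simp add: is_graph_state_def normalized_def)
  then have "8 * (cmod ?c)\<^sup>2 = 1"
    unfolding sum_qbits3 by (simp add: v)
  then show "(cmod ?c)\<^sup>2 = 1/8"
    by simp
qed

lemma cluster_amplitude_product:
  assumes "is_graph_state path_graph 3 \<psi>" and "x \<in> qbits 3" and "x' \<in> qbits 3"
  shows "\<psi> x * cnj (\<psi> x') = cluster_sign x * cluster_sign x' / 8"
proof -
  let ?c = "\<psi> (bits3 False False False)"
  have "?c * cnj ?c = complex_of_real ((cmod ?c)\<^sup>2)"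
    by (simp only: complex_norm_square)
  also have "\<dots> = 1/8"
    unfolding cluster_state_amplitude(2)[OF assms(1)] by simp
  finally have "?c * cnj ?c = 1/8" .
  moreover have "cnj (cluster_sign x') = cluster_sign x'"
    by (simp add: cluster_sign_def)
  ultimately show ?thesis
    using cluster_state_amplitude(1)[OF assms(1)] assms(2,3) by (simp add: ac_simps)
qed

lemma overlap_cluster:
  assumes "is_graph_state path_graph 3 \<psi>"
  shows "overlap 3 \<psi> \<sigma> = (\<Sum>x\<in>qbits 3. \<Sum>x'\<in>qbits 3. cluster_sign x * \<sigma> x x' * cluster_sign x') / 8"
  unfolding overlap_def sum_divide_distrib
proof (intro sum.cong refl)
  fix x x' assume "x \<in> qbits 3" and "x' \<in> qbits 3"
  then have "\<psi> x' * cnj (\<psi> x) = cluster_sign x' * cluster_sign x / 8"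
    using cluster_amplitude_product[OF assms] by blast
  then show "cnj (\<psi> x) * \<sigma> x x' * \<psi> x' = cluster_sign x * \<sigma> x x' * cluster_sign x' / 8"
    by (metis mult.commute mult.left_commute times_divide_eq_right)
qed

text \<open>Up to a global phase, \<open>cluster_basis z\<close> is \<open>\<surd>8\<close> times the graph-state basis vector
  \<open>Z\<^sup>z|\<psi>\<rangle>\<close>.  This basis diagonalises the partial transpose of the noisy cluster state, with
  eigenvalues polynomial in the shrinking factor \<open>\<nu> = 1 - 4p/3\<close> of the depolarising channel.\<close>

definition cluster_basis :: "bool \<times> bool \<times> bool \<Rightarrow> vec" where
  "cluster_basis z x =
     (if (fst z \<and> x 0) \<noteq> ((fst (snd z) \<and> x 1) \<noteq> (snd (snd z) \<and> x 2)) then -1 else 1) * cluster_sign x"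

fun cluster_pt_coeff :: "real \<Rightarrow> bool \<times> bool \<times> bool \<Rightarrow> real" where
  "cluster_pt_coeff \<nu> (z0, z1, True) = (1 - \<nu>\<^sup>2) / 64"
| "cluster_pt_coeff \<nu> (False, z1, False) = (1 + 3 * \<nu>\<^sup>2) / 64"
| "cluster_pt_coeff \<nu> (True, z1, False) = (1 - \<nu>\<^sup>2 - (if z1 then 4 else -4) * \<nu> ^ 3) / 64"

lemma ptrans_noisy_cluster:
  assumes "is_graph_state path_graph 3 \<psi>"
  shows "\<forall>u\<in>qbits 3. \<forall>u'\<in>qbits 3. ptrans (depol_all p 3 (proj \<psi>)) u u' =
    rank_one_sum UNIV (cluster_pt_coeff (1 - 4*p/3)) cluster_basis u u'"
  unfolding ball_qbits3
proof (intro allI)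
  fix a b c a' b' c'
  have proj: "proj \<psi> (bits3 a b c) (bits3 a' b' c') = cluster_sign (bits3 a b c) * cluster_sign (bits3 a' b' c') / 8"
    for a b c a' b' c'
    unfolding proj_def using assms by (intro cluster_amplitude_product bits3_in_qbits)
  show "ptrans (depol_all p 3 (proj \<psi>)) (bits3 a b c) (bits3 a' b' c') =
      rank_one_sum UNIV (cluster_pt_coeff (1 - 4*p/3)) cluster_basis (bits3 a b c) (bits3 a' b' c')"
    unfolding ptrans_def rank_one_sum_def sum_UNIV_bool3 depol_all_3
    by (cases a; cases b; cases c; cases a'; cases b'; cases c')
      (simp_all add: depol_apply_shrink[OF refl] proj cluster_basis_def cluster_sign_def field_simps,
       simp_all add: algebra_simps power2_eq_square power3_eq_cube)
qed

lemma cluster_pt_coeff_nonneg: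
  fixes \<nu> :: real
  assumes "-1/3 \<le> \<nu>" and "\<nu> \<le> 1" and "0 \<le> 1 - \<nu>\<^sup>2 - 4 * \<nu> ^ 3"
  shows "0 \<le> cluster_pt_coeff \<nu> z"
proof -
  have sq: "\<nu>\<^sup>2 \<le> 1"
    using assms(1,2) by (simp add: abs_square_le_1)
  have "0 \<le> 1 - \<nu>\<^sup>2 + 4 * \<nu> ^ 3"
  proof (cases "0 \<le> \<nu>")
    case True
    then show ?thesis using sq by simp
  next
    case False
    then have "(- \<nu>)\<^sup>2 \<le> (1/3)\<^sup>2" and "(- \<nu>) ^ 3 \<le> (1/3) ^ 3"
      using assms(1) by (intro power_mono; simp)+
    then have "\<nu>\<^sup>2 \<le> 1/9" and "- (\<nu> ^ 3) \<le> 1/27"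
      by (simp_all add: power2_eq_square power3_eq_cube)
    then show ?thesis by linarith
  qed
  moreover obtain z0 z1 z2 where "z = (z0, z1, z2)"
    by (cases z) auto
  ultimately show ?thesis
    using sq assms(3) by (cases z0; cases z1; cases z2) simp_all
qed

lemma cubic_in_shrink_factor:
  fixes p :: real
  shows "1 - (1 - 4*p/3)\<^sup>2 - 4 * (1 - 4*p/3) ^ 3 = - (4/27) * (27 - 126 * p + 156 * p ^ 2 - 64 * p ^ 3)"
  by (simp add: field_simps power2_eq_square power3_eq_cube)

text \<open>In the normalised graph-state basis, the partial transpose of \<open>1 - 2|\<psi>\<rangle>\<langle>\<psi>|\<close> is
  \<open>P\<^sub>0\<^sub>0\<^sub>1 + P\<^sub>0\<^sub>1\<^sub>1 + P\<^sub>1\<^sub>0\<^sub>1 + P\<^sub>1\<^sub>1\<^sub>1 + 2 P\<^sub>1\<^sub>1\<^sub>0\<close>.\<close>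

lemma cluster_witness:
  assumes "is_graph_state path_graph 3 \<psi>"
  shows "8 * (trace_op 3 \<sigma> - 2 * overlap 3 \<psi> \<sigma>) =
    quad_form 3 (ptrans \<sigma>) (cluster_basis (False, False, True)) + quad_form 3 (ptrans \<sigma>) (cluster_basis (False, True, True))
    + quad_form 3 (ptrans \<sigma>) (cluster_basis (True, False, True)) + quad_form 3 (ptrans \<sigma>) (cluster_basis (True, True, True))
    + 2 * quad_form 3 (ptrans \<sigma>) (cluster_basis (True, True, False))"
  unfolding overlap_cluster[OF assms] trace_op_def quad_form_def ptrans_def sum_qbits3
  by (simp add: cluster_basis_def cluster_sign_def field_simps)

lemma ppt_cluster_overlap_le:
  assumes "is_graph_state path_graph 3 \<psi>" and "ppt 3 \<sigma>"
  shows "2 * Re (overlap 3 \<psi> \<sigma>) \<le> Re (trace_op 3 \<sigma>)"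
proof -
  have q: "0 \<le> Re (quad_form 3 (ptrans \<sigma>) v)" for v
    using assms(2) by (simp add: ppt_def)
  have "0 \<le> Re (8 * (trace_op 3 \<sigma> - 2 * overlap 3 \<psi> \<sigma>))"
    unfolding cluster_witness[OF assms(1)]
    using q[of "cluster_basis (False, False, True)"] q[of "cluster_basis (False, True, True)"]
      q[of "cluster_basis (True, False, True)"] q[of "cluster_basis (True, True, True)"]
      q[of "cluster_basis (True, True, False)"]
    by simp
  then show ?thesis by simp
qed

lemma noisy_cluster_not_purifiable:
  assumes "0 \<le> p" and "p \<le> 1" and "27 - 126 * p + 156 * p ^ 2 - 64 * p ^ 3 \<le> 0"
    and "is_graph_state path_graph 3 \<psi>"
  shows "\<not> purifiable 3 (depol_all p 3 (proj \<psi>)) \<psi>"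
proof (rule not_purifiable_if_fidelity_le_half)
  have "\<forall>z\<in>UNIV. 0 \<le> cluster_pt_coeff (1 - 4*p/3) z"
    using assms(1-3) by (intro ballI cluster_pt_coeff_nonneg) (simp_all add: cubic_in_shrink_factor)
  then show "2 * Re (overlap 3 \<psi> (slocc_out 3 k m A (depol_all p 3 (proj \<psi>))))
      \<le> Re (trace_op 3 (slocc_out 3 k m A (depol_all p 3 (proj \<psi>))))" for k m A
    by (intro ppt_cluster_overlap_le[OF assms(4)] ppt_slocc_out[OF _ _ _ ptrans_noisy_cluster[OF assms(4)]]) simp_all
qed

lemma sum_swap_pairs:
  "(\<Sum>x\<in>A. \<Sum>x'\<in>A'. \<Sum>s\<in>B. \<Sum>s'\<in>B'. f x x' s s') = (\<Sum>s\<in>B. \<Sum>s'\<in>B'. \<Sum>x\<in>A. \<Sum>x'\<in>A'. f x x' s s')"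
proof -
  have "(\<Sum>x\<in>A. \<Sum>x'\<in>A'. \<Sum>s\<in>B. \<Sum>s'\<in>B'. f x x' s s') = (\<Sum>x\<in>A. \<Sum>s\<in>B. \<Sum>s'\<in>B'. \<Sum>x'\<in>A'. f x x' s s')"
  proof (rule sum.cong[OF refl])
    fix x
    have "(\<Sum>x'\<in>A'. \<Sum>s\<in>B. \<Sum>s'\<in>B'. f x x' s s') = (\<Sum>s\<in>B. \<Sum>x'\<in>A'. \<Sum>s'\<in>B'. f x x' s s')"
      by (rule sum.swap)
    also have "\<dots> = (\<Sum>s\<in>B. \<Sum>s'\<in>B'. \<Sum>x'\<in>A'. f x x' s s')"
      by (rule sum.cong[OF refl], rule sum.swap)
    finally show "(\<Sum>x'\<in>A'. \<Sum>s\<in>B. \<Sum>s'\<in>B'. f x x' s s') = (\<Sum>s\<in>B. \<Sum>s'\<in>B'. \<Sum>x'\<in>A'. f x x' s s')" .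
  qed
  also have "\<dots> = (\<Sum>s\<in>B. \<Sum>x\<in>A. \<Sum>s'\<in>B'. \<Sum>x'\<in>A'. f x x' s s')"
    by (rule sum.swap)
  also have "\<dots> = (\<Sum>s\<in>B. \<Sum>s'\<in>B'. \<Sum>x\<in>A. \<Sum>x'\<in>A'. f x x' s s')"
    by (rule sum.cong[OF refl], rule sum.swap)
  finally show ?thesis .
qed

definition block :: "nat \<Rightarrow> nat \<Rightarrow> cfg \<Rightarrow> cfg" where
  "block b i y = (\<lambda>j. if j < b then y (i * b + j) else (\<lambda>_. False))"

lemma block_index_less: "i < a \<Longrightarrow> j < b \<Longrightarrow> i * b + j < a * (b :: nat)"
proof -
  assume "i < a" and "j < b"
  then have "Suc i * b \<le> a * b"
    by (intro mult_le_mono1) simp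
  then show ?thesis
    using \<open>j < b\<close> by simp
qed

lemma block_cfgs:
  assumes "y \<in> cfgs n (a * b)" and "i < a"
  shows "block b i y \<in> cfgs n b"
  using assms(1) block_index_less[OF assms(2)] by (simp add: cfgs_def block_def)

definition join_blocks :: "nat \<Rightarrow> nat \<Rightarrow> (nat \<Rightarrow> cfg) \<Rightarrow> cfg" where
  "join_blocks a b g = (\<lambda>j. if j < a * b then g (j div b) (j mod b) else (\<lambda>_. False))"

lemma block_position:
  fixes j b :: nat
  assumes "j < a * b"
  shows "0 < b" and "j div b < a" and "j mod b < b"
proof -
  show "0 < b"
    using assms by (cases b) simp_all
  then show "j div b < a" and "j mod b < b"
    using assms by (simp_all add: less_mult_imp_div_less)
qed

lemma join_blocks_cfgs:
  assumes "g \<in> PiE {..<a} (\<lambda>_. cfgs n b)"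
  shows "join_blocks a b g \<in> cfgs n (a * b)"
proof -
  have "g (j div b) (j mod b) \<in> qbits n" if "j < a * b" for j
  proof -
    have "g (j div b) \<in> cfgs n b"
      using assms block_position(2)[OF that] by auto
    then show ?thesis
      using block_position(3)[OF that] by (simp add: cfgs_def)
  qed
  then show ?thesis
    by (simp add: cfgs_def join_blocks_def)
qed

lemma block_join_blocks:
  assumes "g \<in> PiE {..<a} (\<lambda>_. cfgs n b)" and "i < a"
  shows "block b i (join_blocks a b g) = g i"
proof
  fix j
  have gi: "g i \<in> cfgs n b"
    using assms by auto
  show "block b i (join_blocks a b g) j = g i j"
  proof (cases "j < b")
    case True
    then have "(i * b + j) div b = i" and "(i * b + j) mod b = j"
      by simp_all
    then show ?thesis
      using True assms(2) by (simp add: block_def join_blocks_def block_index_less)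
  next
    case False
    then show ?thesis
      using gi by (simp add: block_def cfgs_def)
  qed
qed

lemma join_blocks_block:
  assumes "y \<in> cfgs n (a * b)"
  shows "join_blocks a b (\<lambda>i. block b i y) = y"
proof
  fix j
  show "join_blocks a b (\<lambda>i. block b i y) j = y j"
  proof (cases "j < a * b")
    case True
    then show ?thesis
      using block_position(3)[OF True] by (simp add: join_blocks_def block_def)
  next
    case False
    then show ?thesis
      using assms by (simp add: join_blocks_def cfgs_def)
  qed
qed

lemma sum_cfgs_blocks:
  fixes F :: "nat \<Rightarrow> cfg \<Rightarrow> 'a :: comm_semiring_1"
  shows "(\<Sum>y\<in>cfgs n (a * b). \<Prod>i<a. F i (block b i y)) = (\<Prod>i<a. \<Sum>w\<in>cfgs n b. F i w)"
proof -
  let ?split = "\<lambda>y. restrict (\<lambda>i. block b i y) {..<a}"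
  have "(\<Sum>y\<in>cfgs n (a * b). \<Prod>i<a. F i (block b i y)) = (\<Sum>g\<in>PiE {..<a} (\<lambda>_. cfgs n b). \<Prod>i<a. F i (g i))"
  proof (rule sum.reindex_bij_witness[where i = "join_blocks a b" and j = ?split])
    fix y assume y: "y \<in> cfgs n (a * b)"
    have "join_blocks a b (?split y) = join_blocks a b (\<lambda>i. block b i y)"
    proof
      fix j
      show "join_blocks a b (?split y) j = join_blocks a b (\<lambda>i. block b i y) j"
        by (cases "j < a * b") (simp_all add: join_blocks_def block_position(2))
    qed
    then show "join_blocks a b (?split y) = y"
      using join_blocks_block[OF y] by simp
    show "?split y \<in> PiE {..<a} (\<lambda>_. cfgs n b)"
      using y by (simp add: block_cfgs)
    show "(\<Prod>i<a. F i (?split y i)) = (\<Prod>i<a. F i (block b i y))"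
      by (rule prod.cong) simp_all
  next
    fix g assume g: "g \<in> PiE {..<a} (\<lambda>_. cfgs n b)"
    show "?split (join_blocks a b g) = g"
    proof
      fix i
      show "?split (join_blocks a b g) i = g i"
        using block_join_blocks[OF g] PiE_arb[OF g] by (cases "i < a") simp_all
    qed
    show "join_blocks a b g \<in> cfgs n (a * b)"
      using g by (rule join_blocks_cfgs)
  qed
  also have "\<dots> = (\<Prod>i<a. \<Sum>w\<in>cfgs n b. F i w)"
    by (rule prod_sum_PiE[where f = F and A = "{..<a}" and B = "\<lambda>_. cfgs n b", symmetric])
      (simp_all add: finite_cfgs)
  finally show ?thesis .
qed

lemma tpow_blocks: "tpow \<rho> (a * b) y y' = (\<Prod>i<a. tpow \<rho> b (block b i y) (block b i y'))"
proof -
  have "tpow \<rho> (a * b) y y' = (\<Prod>i<a. \<Prod>j\<in>{i * b..<i * b + b}. \<rho> (y j) (y' j))"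
    unfolding tpow_def by (simp add: prod.nat_group)
  also have "\<dots> = (\<Prod>i<a. tpow \<rho> b (block b i y) (block b i y'))"
  proof (rule prod.cong[OF refl])
    fix i
    have "(\<Prod>j\<in>{0 + i * b..<b + i * b}. \<rho> (y j) (y' j)) = (\<Prod>j\<in>{0..<b}. \<rho> (y (j + i * b)) (y' (j + i * b)))"
      by (rule prod.shift_bounds_nat_ivl)
    then show "(\<Prod>j\<in>{i * b..<i * b + b}. \<rho> (y j) (y' j)) = tpow \<rho> b (block b i y) (block b i y')"
      by (simp add: tpow_def block_def atLeast0LessThan add.commute)
  qed
  finally show ?thesis .
qed

lemma sum2_cfgs_blocks:
  fixes G :: "cfg \<Rightarrow> cfg \<Rightarrow> 'a :: comm_semiring_1"
  shows "(\<Sum>y\<in>cfgs n (a * b). \<Sum>y'\<in>cfgs n (a * b). \<Prod>i<a. G (block b i y) (block b i y')) =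
     (\<Sum>w\<in>cfgs n b. \<Sum>w'\<in>cfgs n b. G w w') ^ a"
proof -
  have "(\<Sum>y\<in>cfgs n (a * b). \<Sum>y'\<in>cfgs n (a * b). \<Prod>i<a. G (block b i y) (block b i y')) =
      (\<Sum>y\<in>cfgs n (a * b). \<Prod>i<a. \<Sum>w'\<in>cfgs n b. G (block b i y) w')"
    by (intro sum.cong refl) (rule sum_cfgs_blocks)
  also have "\<dots> = (\<Prod>i<a. \<Sum>w\<in>cfgs n b. \<Sum>w'\<in>cfgs n b. G w w')"
    by (rule sum_cfgs_blocks)
  finally show ?thesis by simp
qed

definition const_cfg :: "nat \<Rightarrow> (nat \<Rightarrow> bool) \<Rightarrow> cfg" where
  "const_cfg b u = (\<lambda>j. if j < b then u else (\<lambda>_. False))"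

lemma const_cfg_0 [simp]: "0 < b \<Longrightarrow> const_cfg b u 0 = u"
  by (simp add: const_cfg_def)

lemma cfgs_const_iff:
  assumes "w \<in> cfgs n b"
  shows "(\<forall>j<b. w j = w 0) \<longleftrightarrow> w = const_cfg b (w 0)"
proof
  assume same: "\<forall>j<b. w j = w 0"
  show "w = const_cfg b (w 0)"
  proof
    fix j
    show "w j = const_cfg b (w 0) j"
    proof (cases "j < b")
      case True
      then have "w j = w 0"
        using same by blast
      then show ?thesis
        using True by (simp add: const_cfg_def)
    next
      case False
      then show ?thesis
        using assms by (simp add: const_cfg_def cfgs_def)
    qed
  qed
next
  assume const: "w = const_cfg b (w 0)"
  show "\<forall>j<b. w j = w 0"
  proof (intro allI impI)
    fix j assume "j < b"
    then show "w j = w 0"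
      using fun_cong[OF const, of j] by (simp add: const_cfg_def)
  qed
qed

lemma sum_cfgs_const:
  assumes "0 < b"
  shows "(\<Sum>w\<in>cfgs n b. if w = const_cfg b (w 0) then h w else 0) = (\<Sum>u\<in>qbits n. h (const_cfg b u))"
proof -
  have "{w \<in> cfgs n b. w = const_cfg b (w 0)} = const_cfg b ` qbits n"
  proof
    show "{w \<in> cfgs n b. w = const_cfg b (w 0)} \<subseteq> const_cfg b ` qbits n"
    proof
      fix w assume w: "w \<in> {w \<in> cfgs n b. w = const_cfg b (w 0)}"
      then have "w 0 \<in> qbits n"
        using assms by (simp add: cfgs_def)
      with w show "w \<in> const_cfg b ` qbits n"
        by blast
    qed
    have "const_cfg b u \<in> cfgs n b" if "u \<in> qbits n" for u
      using that by (simp add: cfgs_def const_cfg_def)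
    then show "const_cfg b ` qbits n \<subseteq> {w \<in> cfgs n b. w = const_cfg b (w 0)}"
      using assms by auto
  qed
  moreover have "inj_on (const_cfg b) (qbits n)"
    by (rule inj_onI) (metis assms const_cfg_0)
  ultimately show ?thesis
    by (simp add: sum.inter_filter[OF finite_cfgs, symmetric] sum.reindex)
qed

lemma tpow_const_cfg: "tpow \<rho> b (const_cfg b u) (const_cfg b u') = \<rho> u u' ^ b"
  by (simp add: tpow_def const_cfg_def)

section \<open>The repetition-and-parity protocol\<close>

definition chi :: "bool \<Rightarrow> bool \<Rightarrow> complex" where
  "chi s t = (if s \<and> t then -1 else 1)"

definition rep_chi :: "nat \<Rightarrow> bool \<Rightarrow> (nat \<Rightarrow> bool) \<Rightarrow> complex" where
  "rep_chi b s w = (if \<forall>j<b. w j = w 0 then chi s (w 0) else 0)"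

text \<open>Each party projects every block of \<open>b\<close> of its qubits onto \<open>span {|0\<dots>0\<rangle>, |1\<dots>1\<rangle>}\<close>
  and outputs the parity of the \<open>a\<close> block values: summing the characters over \<open>s\<close> gives
  \<open>2\<cdot>[t = w\<^sub>1 \<oplus> \<dots> \<oplus> w\<^sub>a]\<close>.\<close>

definition parity_kraus :: "nat \<Rightarrow> nat \<Rightarrow> bool \<Rightarrow> (nat \<Rightarrow> bool) \<Rightarrow> complex" where
  "parity_kraus a b t z = (\<Sum>s\<in>UNIV. chi s t * (\<Prod>i<a. rep_chi b s (\<lambda>j. z (i * b + j))))"

definition chi2 :: "bool \<times> bool \<Rightarrow> (nat \<Rightarrow> bool) \<Rightarrow> complex" where
  "chi2 s x = chi (fst s) (x 0) * chi (snd s) (x 1)"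

definition block_chi2 :: "nat \<Rightarrow> bool \<times> bool \<Rightarrow> cfg \<Rightarrow> complex" where
  "block_chi2 b s w = rep_chi b (fst s) (\<lambda>j. w j 0) * rep_chi b (snd s) (\<lambda>j. w j 1)"

definition char_matrix :: "nat \<Rightarrow> op \<Rightarrow> bool \<times> bool \<Rightarrow> bool \<times> bool \<Rightarrow> complex" where
  "char_matrix b \<rho> s s' =
     (\<Sum>w\<in>cfgs 2 b. \<Sum>w'\<in>cfgs 2 b. block_chi2 b s w * tpow \<rho> b w w' * block_chi2 b s' w')"

lemma cnj_chi [simp]: "cnj (chi s t) = chi s t"
  by (simp add: chi_def)

lemma cnj_chi2 [simp]: "cnj (chi2 s x) = chi2 s x"
  by (simp add: chi2_def)

lemma cnj_block_chi2 [simp]: "cnj (block_chi2 b s w) = block_chi2 b s w"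
  by (simp add: block_chi2_def rep_chi_def)

lemma kraus_el_parity:
  assumes "0 < b"
  shows "kraus_el 2 (\<lambda>_ _. parity_kraus a b) r x y =
    (\<Sum>s\<in>UNIV. chi2 s x * (\<Prod>i<a. block_chi2 b s (block b i y)))"
proof -
  have blk: "rep_chi b s (\<lambda>j. reg y k (i * b + j)) = rep_chi b s (\<lambda>j. block b i y j k)" for s k i
    using assms by (auto simp: rep_chi_def reg_def block_def)
  have "kraus_el 2 (\<lambda>_ _. parity_kraus a b) r x y =
      parity_kraus a b (x 0) (reg y 0) * parity_kraus a b (x 1) (reg y 1)"
    by (simp add: kraus_el_def numeral_2_eq_2)
  also have "\<dots> = (\<Sum>s0\<in>UNIV. chi s0 (x 0) * (\<Prod>i<a. rep_chi b s0 (\<lambda>j. block b i y j 0))) *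
      (\<Sum>s1\<in>UNIV. chi s1 (x 1) * (\<Prod>i<a. rep_chi b s1 (\<lambda>j. block b i y j 1)))"
    by (simp only: parity_kraus_def blk)
  also have "\<dots> = (\<Sum>s\<in>UNIV. chi2 s x * (\<Prod>i<a. block_chi2 b s (block b i y)))"
    by (simp add: sum_UNIV_bool sum_UNIV_bool2 chi2_def block_chi2_def prod.distrib algebra_simps)
  finally show ?thesis .
qed

(* In the character basis, the parity of the a blocks turns into a product over the blocks. *)
lemma slocc_out_parity:
  assumes "0 < b"
  shows "slocc_out 2 (a * b) 1 (\<lambda>_ _. parity_kraus a b) \<rho> x x' =
    (\<Sum>s\<in>UNIV. \<Sum>s'\<in>UNIV. chi2 s x * chi2 s' x' * char_matrix b \<rho> s s' ^ a)"
proof -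
  let ?G = "\<lambda>s s' w w'. block_chi2 b s w * tpow \<rho> b w w' * block_chi2 b s' w'"
  have "slocc_out 2 (a * b) 1 (\<lambda>_ _. parity_kraus a b) \<rho> x x' =
      (\<Sum>y\<in>cfgs 2 (a * b). \<Sum>y'\<in>cfgs 2 (a * b). \<Sum>s\<in>UNIV. \<Sum>s'\<in>UNIV.
        chi2 s x * chi2 s' x' * (\<Prod>i<a. ?G s s' (block b i y) (block b i y')))"
    unfolding slocc_out_def kraus_el_parity[OF assms] tpow_blocks
    by (simp add: cnj_sum cnj_prod sum_distrib_left sum_distrib_right prod.distrib ac_simps)
  also have "\<dots> = (\<Sum>s\<in>UNIV. \<Sum>s'\<in>UNIV. \<Sum>y\<in>cfgs 2 (a * b). \<Sum>y'\<in>cfgs 2 (a * b).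
        chi2 s x * chi2 s' x' * (\<Prod>i<a. ?G s s' (block b i y) (block b i y')))"
    by (rule sum_swap_pairs)
  also have "\<dots> = (\<Sum>s\<in>UNIV. \<Sum>s'\<in>UNIV. chi2 s x * chi2 s' x' * char_matrix b \<rho> s s' ^ a)"
  proof (intro sum.cong refl)
    fix s s'
    show "(\<Sum>y\<in>cfgs 2 (a * b). \<Sum>y'\<in>cfgs 2 (a * b). chi2 s x * chi2 s' x' * (\<Prod>i<a. ?G s s' (block b i y) (block b i y')))
        = chi2 s x * chi2 s' x' * char_matrix b \<rho> s s' ^ a"
      by (simp only: sum_distrib_left[symmetric] sum2_cfgs_blocks[where G = "?G s s'"] char_matrix_def)
  qed
  finally show ?thesis .
qed

lemma block_chi2_eq:
  assumes "0 < b" and "w \<in> cfgs 2 b"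
  shows "block_chi2 b s w = (if w = const_cfg b (w 0) then chi2 s (w 0) else 0)"
proof -
  have mem: "w j \<in> qbits 2" if "j < b" for j
    using assms(2) that by (simp add: cfgs_def)
  have eq: "w j = w 0 \<longleftrightarrow> w j 0 = w 0 0 \<and> w j 1 = w 0 1" if "j < b" for j
    using mem[OF that] mem[OF assms(1)] by (rule qbits2_eq_iff)
  have "(\<forall>j<b. w j 0 = w 0 0) \<and> (\<forall>j<b. w j 1 = w 0 1) \<longleftrightarrow> (\<forall>j<b. w j = w 0)"
  proof
    assume "(\<forall>j<b. w j 0 = w 0 0) \<and> (\<forall>j<b. w j 1 = w 0 1)"
    then show "\<forall>j<b. w j = w 0"
      using eq by blast
  next
    assume "\<forall>j<b. w j = w 0"
    then show "(\<forall>j<b. w j 0 = w 0 0) \<and> (\<forall>j<b. w j 1 = w 0 1)"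
      using eq by blast
  qed
  also have "\<dots> \<longleftrightarrow> w = const_cfg b (w 0)"
    by (rule cfgs_const_iff[OF assms(2)])
  finally have cond: "(\<forall>j<b. w j 0 = w 0 0) \<and> (\<forall>j<b. w j 1 = w 0 1) \<longleftrightarrow> w = const_cfg b (w 0)" .
  have mult_if: "(if P then x else 0) * (if Q then y else 0) = (if P \<and> Q then x * y else (0 :: complex))"
    for P Q x y by simp
  show ?thesis
    unfolding block_chi2_def rep_chi_def chi2_def mult_if cond by (rule refl)
qed

lemma sum_cfgs_block_chi2:
  assumes "0 < b"
  shows "(\<Sum>w\<in>cfgs 2 b. block_chi2 b s w * h w) = (\<Sum>u\<in>qbits 2. chi2 s u * h (const_cfg b u))"
proof -
  have "(\<Sum>w\<in>cfgs 2 b. block_chi2 b s w * h w) =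
      (\<Sum>w\<in>cfgs 2 b. if w = const_cfg b (w 0) then chi2 s (w 0) * h w else 0)"
    by (intro sum.cong refl) (simp add: block_chi2_eq[OF assms])
  also have "\<dots> = (\<Sum>u\<in>qbits 2. chi2 s u * h (const_cfg b u))"
    using assms by (simp add: sum_cfgs_const)
  finally show ?thesis .
qed

lemma char_matrix_const:
  assumes "0 < b"
  shows "char_matrix b \<rho> s s' = (\<Sum>u\<in>qbits 2. \<Sum>u'\<in>qbits 2. chi2 s u * \<rho> u u' ^ b * chi2 s' u')"
proof -
  have "char_matrix b \<rho> s s' =
      (\<Sum>w\<in>cfgs 2 b. block_chi2 b s w * (\<Sum>w'\<in>cfgs 2 b. block_chi2 b s' w' * tpow \<rho> b w w'))"
    by (simp add: char_matrix_def sum_distrib_left mult_ac)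
  also have "\<dots> = (\<Sum>u\<in>qbits 2. chi2 s u * (\<Sum>u'\<in>qbits 2. chi2 s' u' * \<rho> u u' ^ b))"
    by (simp add: sum_cfgs_block_chi2[OF assms] tpow_const_cfg)
  also have "\<dots> = (\<Sum>u\<in>qbits 2. \<Sum>u'\<in>qbits 2. chi2 s u * \<rho> u u' ^ b * chi2 s' u')"
    by (simp add: sum_distrib_left mult_ac)
  finally show ?thesis .
qed

lemma noisy_bell_power:
  assumes "0 < b"
  shows "depol_all p 2 (proj bell) (bits2 a c) (bits2 a' c') ^ b = complex_of_real
     (if a = a' \<and> c = c' then (if a = c then ((bell_fidelity p + bell_error p) / 2) ^ b else bell_error p ^ b)
      else if a = c \<and> a' = c' then ((bell_fidelity p - bell_error p) / 2) ^ b else 0)"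
proof -
  have e: "bell_error p + (bell_fidelity p - bell_error p) / 2 = (bell_fidelity p + bell_error p) / 2"
    by (simp add: field_simps)
  show ?thesis
    unfolding noisy_bell_apply using assms
    by (cases a; cases c; cases a'; cases c') (simp_all add: e)
qed

definition bool_sign :: "bool \<Rightarrow> real" where
  "bool_sign s = (if s then -1 else 1)"

lemma char_matrix_entries:
  assumes "0 < b"
    and entries: "\<And>a c a' c'. \<rho> (bits2 a c) (bits2 a' c') ^ b = complex_of_real
       (if a = a' \<and> c = c' then (if a = c then \<alpha> else \<beta>) else if a = c \<and> a' = c' then \<gamma> else 0)"
  shows "char_matrix b \<rho> s s' = complex_of_real
    (\<alpha> * (1 + bool_sign (fst s) * bool_sign (snd s) * bool_sign (fst s') * bool_sign (snd s'))
     + \<beta> * (bool_sign (snd s) * bool_sign (snd s') + bool_sign (fst s) * bool_sign (fst s'))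
     + \<gamma> * (bool_sign (fst s') * bool_sign (snd s') + bool_sign (fst s) * bool_sign (snd s)))"
proof -
  obtain s0 s1 s0' s1' where "s = (s0, s1)" and "s' = (s0', s1')"
    by (cases s; cases s') auto
  then show ?thesis
    unfolding char_matrix_const[OF assms(1)] sum_qbits2 entries
    by (cases s0; cases s1; cases s0'; cases s1') (simp_all add: chi2_def chi_def bool_sign_def algebra_simps)
qed

lemma parity_output_trace:
  assumes "0 < b"
    and entries: "\<And>a c a' c'. \<rho> (bits2 a c) (bits2 a' c') ^ b = complex_of_real
       (if a = a' \<and> c = c' then (if a = c then \<alpha> else \<beta>) else if a = c \<and> a' = c' then \<gamma> else 0)"
  shows "trace_op 2 (slocc_out 2 (a * b) 1 (\<lambda>_ _. parity_kraus a b) \<rho>) =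
    complex_of_real (8 * ((2 * \<alpha> + 2 * \<beta> + 2 * \<gamma>) ^ a + (2 * \<alpha> + 2 * \<beta> - 2 * \<gamma>) ^ a))"
  unfolding trace_op_def sum_qbits2 slocc_out_parity[OF assms(1)] char_matrix_entries[OF assms] sum_UNIV_bool2
  by (simp add: chi2_def chi_def bool_sign_def algebra_simps)

lemma parity_output_overlap:
  assumes "0 < b"
    and entries: "\<And>a c a' c'. \<rho> (bits2 a c) (bits2 a' c') ^ b = complex_of_real
       (if a = a' \<and> c = c' then (if a = c then \<alpha> else \<beta>) else if a = c \<and> a' = c' then \<gamma> else 0)"
  shows "overlap 2 bell (slocc_out 2 (a * b) 1 (\<lambda>_ _. parity_kraus a b) \<rho>) =
    complex_of_real (4 * ((2 * \<alpha> + 2 * \<beta> + 2 * \<gamma>) ^ a + (2 * \<alpha> - 2 * \<beta> + 2 * \<gamma>) ^ a))"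
  unfolding overlap_bell slocc_out_parity[OF assms(1)] char_matrix_entries[OF assms] sum_UNIV_bool2
  by (simp add: chi2_def chi_def bool_sign_def algebra_simps)

section \<open>Purification of the Bell pair\<close>

lemma one_minus_power_mult_le:
  fixes x :: real
  assumes "0 \<le> x" and "x \<le> 1"
  shows "(1 - x) ^ a * (1 + real a * x) \<le> 1"
proof -
  have "(1 - x) ^ a * (1 + real a * x) \<le> (1 - x) ^ a * (1 + x) ^ a"
    using assms Bernoulli_inequality[of x a] by (intro mult_left_mono) simp_all
  also have "\<dots> = (1 - x * x) ^ a"
    by (simp add: power_mult_distrib[symmetric] algebra_simps)
  also have "\<dots> \<le> 1"
    using assms by (intro power_le_one) (simp_all add: mult_le_one)
  finally show ?thesis .
qed

lemma fidelity_bound: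
  fixes P x y \<epsilon> :: real and a :: nat
  assumes "0 < P" and "0 \<le> x" and "x \<le> 1" and "y \<le> 1" and "0 < \<epsilon>"
    and "real a * y \<le> \<epsilon>" and "2 \<le> \<epsilon> * real a * x"
  shows "2 * (1 - \<epsilon>) * (P ^ a + (P * (1 - x)) ^ a) \<le> P ^ a + (P * (1 - y)) ^ a"
proof -
  have y_pow: "1 - \<epsilon> \<le> (1 - y) ^ a"
  proof -
    have "1 - \<epsilon> \<le> 1 + real a * (- y)"
      using assms(6) by simp
    also have "\<dots> \<le> (1 + - y) ^ a"
      using assms(4) by (intro Bernoulli_inequality) simp
    finally show ?thesis by simp
  qed
  have x_pow: "(1 - x) ^ a \<le> \<epsilon> / 2"
  proof -
    have "2 / \<epsilon> \<le> 1 + real a * x"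
      using assms(5,7) by (simp add: divide_le_eq algebra_simps)
    then have "(1 - x) ^ a * (2 / \<epsilon>) \<le> (1 - x) ^ a * (1 + real a * x)"
      using assms(3) by (intro mult_left_mono) simp_all
    also have "\<dots> \<le> 1"
      using assms(2,3) by (rule one_minus_power_mult_le)
    finally show ?thesis
      using assms(5) by (simp add: field_simps)
  qed
  have "2 * (1 - \<epsilon>) * (1 + (1 - x) ^ a) \<le> 1 + (1 - y) ^ a"
  proof (cases "\<epsilon> \<le> 1")
    case True
    have "2 * (1 - \<epsilon>) * (1 + (1 - x) ^ a) \<le> 2 * (1 - \<epsilon>) * (1 + \<epsilon> / 2)"
      using True x_pow by (intro mult_left_mono) simp_all
    also have "\<dots> = 2 - \<epsilon> - \<epsilon> * \<epsilon>"
      by (simp add: algebra_simps)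
    also have "\<dots> \<le> 1 + (1 - y) ^ a"
      using y_pow zero_le_square[of \<epsilon>] by linarith
    finally show ?thesis .
  next
    case False
    have "2 * (1 - \<epsilon>) \<le> 0" and "0 \<le> 1 + (1 - x) ^ a"
      using False assms(3) by simp_all
    then have "2 * (1 - \<epsilon>) * (1 + (1 - x) ^ a) \<le> 0"
      by (rule mult_nonpos_nonneg)
    moreover have "0 \<le> 1 + (1 - y) ^ a"
      using assms(4) by simp
    ultimately show ?thesis by linarith
  qed
  then have "P ^ a * (2 * (1 - \<epsilon>) * (1 + (1 - x) ^ a)) \<le> P ^ a * (1 + (1 - y) ^ a)"
    using assms(1) by (intro mult_left_mono) simp_all
  then show ?thesis
    unfolding power_mult_distrib by (simp add: algebra_simps)
qed

lemma parity_fidelity_bound: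
  fixes \<alpha> \<beta> \<gamma> \<epsilon> :: real and a :: nat
  assumes "0 < \<alpha>" and "0 \<le> \<beta>" and "\<beta> \<le> \<alpha>" and "0 \<le> \<gamma>" and "\<gamma> \<le> \<alpha>" and "0 < \<epsilon>"
    and "2 * real a * \<beta> \<le> \<epsilon> * \<alpha>" and "3 * \<alpha> \<le> \<epsilon> * real a * \<gamma>"
  shows "(1 - \<epsilon>) * (8 * ((2 * \<alpha> + 2 * \<beta> + 2 * \<gamma>) ^ a + (2 * \<alpha> + 2 * \<beta> - 2 * \<gamma>) ^ a))
    \<le> 4 * ((2 * \<alpha> + 2 * \<beta> + 2 * \<gamma>) ^ a + (2 * \<alpha> - 2 * \<beta> + 2 * \<gamma>) ^ a)"
proof -
  define P where "P = 2 * \<alpha> + 2 * \<beta> + 2 * \<gamma>"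
  have P: "2 * \<alpha> \<le> P" "P \<le> 6 * \<alpha>"
    using assms(2-5) by (simp_all add: P_def)
  then have P0: "0 < P"
    using assms(1) by linarith
  have "2 * (1 - \<epsilon>) * (P ^ a + (P * (1 - 4 * \<gamma> / P)) ^ a) \<le> P ^ a + (P * (1 - 4 * \<beta> / P)) ^ a"
  proof (rule fidelity_bound[OF P0])
    show "0 \<le> 4 * \<gamma> / P" and "4 * \<gamma> / P \<le> 1" and "4 * \<beta> / P \<le> 1"
      using P0 assms(2-5) by (simp_all add: P_def field_simps)
    have "real a * (4 * \<beta> / P) \<le> real a * (4 * \<beta> / (2 * \<alpha>))"
      using P assms(1,2) by (intro mult_left_mono divide_left_mono) simp_all
    also have "\<dots> \<le> \<epsilon>"
      using assms(1,7) by (simp add: field_simps)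
    finally show "real a * (4 * \<beta> / P) \<le> \<epsilon>" .
    have "2 \<le> \<epsilon> * real a * (4 * \<gamma> / (6 * \<alpha>))"
      using assms(1,8) by (simp add: field_simps)
    also have "\<dots> \<le> \<epsilon> * real a * (4 * \<gamma> / P)"
      using P P0 assms(4,6) by (intro mult_left_mono divide_left_mono) simp_all
    finally show "2 \<le> \<epsilon> * real a * (4 * \<gamma> / P)" .
  qed (use assms(6) in simp)
  moreover have "P * (1 - 4 * \<gamma> / P) = 2 * \<alpha> + 2 * \<beta> - 2 * \<gamma>"
    and "P * (1 - 4 * \<beta> / P) = 2 * \<alpha> - 2 * \<beta> + 2 * \<gamma>"
    using P0 by (simp_all add: P_def field_simps)
  ultimately have "4 * (2 * (1 - \<epsilon>) * (P ^ a + (2 * \<alpha> + 2 * \<beta> - 2 * \<gamma>) ^ a))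
      \<le> 4 * (P ^ a + (2 * \<alpha> - 2 * \<beta> + 2 * \<gamma>) ^ a)"
    by simp
  then show ?thesis
    by (simp add: P_def algebra_simps)
qed

lemma exists_pos_power_less:
  fixes t \<delta> :: real
  assumes "0 \<le> t" and "t < 1" and "0 < \<delta>"
  obtains b where "0 < b" and "t ^ b < \<delta>"
proof -
  obtain n where "t ^ n < \<delta>"
    using real_arch_pow_inv[OF assms(3,2)] by blast
  moreover have "t ^ Suc n \<le> t ^ n"
    using assms(1,2) by (intro power_decreasing) simp_all
  ultimately show ?thesis
    by (intro that[of "Suc n"]) simp_all
qed

(* The repetition length b makes z^b negligible against y^b; the number a of blocks is then
   chosen between the two scales. *)
lemma exists_block_sizes:
  fixes x y z \<epsilon> :: real
  assumes "0 \<le> z" and "z < y" and "y \<le> x" and "0 < \<epsilon>" and "\<epsilon> \<le> 1"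
  shows "\<exists>a b. 0 < a \<and> 0 < b \<and> 2 * real a * z ^ b \<le> \<epsilon> * x ^ b
    \<and> 3 * x ^ b \<le> \<epsilon> * real a * y ^ b"
proof -
  have y0: "0 < y"
    using assms(1,2) by linarith
  obtain b where b: "0 < b" and "(z / y) ^ b < \<epsilon>\<^sup>2 / 8"
    using exists_pos_power_less[of "z / y" "\<epsilon>\<^sup>2 / 8"] assms(1,2,4) y0 by auto
  then have "(z / y) ^ b * y ^ b \<le> \<epsilon>\<^sup>2 / 8 * y ^ b"
    using y0 by (intro mult_right_mono) simp_all
  then have zb: "z ^ b \<le> \<epsilon>\<^sup>2 / 8 * y ^ b"
    using y0 by (simp add: power_divide)
  have yb: "0 < y ^ b" and xb: "y ^ b \<le> x ^ b"
    using y0 assms(3) by (simp_all add: power_mono)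
  define r where "r = 3 * x ^ b / (\<epsilon> * y ^ b)"
  have "\<epsilon> * y ^ b \<le> 1 * y ^ b"
    using assms(5) yb by (intro mult_right_mono) simp_all
  then have "\<epsilon> * y ^ b \<le> x ^ b"
    using xb by simp
  then have r3: "3 \<le> r"
    using yb assms(4) by (simp add: r_def le_divide_eq)
  define a where "a = nat \<lceil>r\<rceil>"
  have ar: "r \<le> real a" and ar1: "real a < r + 1"
    using r3 unfolding a_def by (simp_all add: real_nat_ceiling_ge) linarith
  have "3 * x ^ b \<le> \<epsilon> * real a * y ^ b"
    using ar yb assms(4) by (simp add: r_def field_simps)
  moreover have "2 * real a * z ^ b \<le> \<epsilon> * x ^ b"
  proof -
    have "2 * real a * z ^ b \<le> 2 * (4 / 3 * r) * (\<epsilon>\<^sup>2 / 8 * y ^ b)"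
      using ar1 r3 zb assms(1) by (intro mult_mono) simp_all
    also have "\<dots> = \<epsilon> * x ^ b"
      using y0 assms(4) by (simp add: r_def power2_eq_square field_simps)
    finally show ?thesis .
  qed
  moreover have "0 < a"
    using ar r3 by simp
  ultimately show ?thesis
    using b by blast
qed

lemma noisy_bell_parity_fidelity:
  fixes e :: real
  assumes "0 \<le> p" and "p \<le> 1" and "1/2 < bell_fidelity p" and "0 < e" and "e \<le> 1"
  obtains a b where "0 < a" and "0 < b"
    and "0 < Re (trace_op 2 (slocc_out 2 (a * b) 1 (\<lambda>_ _. parity_kraus a b) (depol_all p 2 (proj bell))))"
    and "(1 - e) * Re (trace_op 2 (slocc_out 2 (a * b) 1 (\<lambda>_ _. parity_kraus a b) (depol_all p 2 (proj bell))))
      \<le> Re (overlap 2 bell (slocc_out 2 (a * b) 1 (\<lambda>_ _. parity_kraus a b) (depol_all p 2 (proj bell))))"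
proof -
  define F q where "F = bell_fidelity p" and "q = bell_error p"
  have q0: "0 \<le> q"
    using bell_fidelity_le_1[OF assms(1,2)] by (simp add: q_def bell_error_def F_def)
  have q_less: "q < (F - q) / 2"
    using assms(3) by (simp add: q_def bell_error_def F_def field_simps)
  obtain a b where a: "0 < a" and b: "0 < b"
    and small_flip: "2 * real a * q ^ b \<le> e * ((F + q) / 2) ^ b"
    and large_phase: "3 * ((F + q) / 2) ^ b \<le> e * real a * ((F - q) / 2) ^ b"
    using exists_block_sizes[OF q0 q_less, of "(F + q) / 2" e] q0 assms(4,5) by auto
  define \<alpha> \<beta> \<gamma> where "\<alpha> = ((F + q) / 2) ^ b" and "\<beta> = q ^ b" and "\<gamma> = ((F - q) / 2) ^ b"
  have bounds: "0 < \<alpha>" "0 \<le> \<beta>" "\<beta> \<le> \<alpha>" "0 \<le> \<gamma>" "\<gamma> \<le> \<alpha>"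
    unfolding \<alpha>_def \<beta>_def \<gamma>_def using q0 q_less by (simp_all, (intro power_mono; simp)+)
  note entries = noisy_bell_power[OF b, of p, folded F_def q_def, folded \<alpha>_def \<beta>_def \<gamma>_def]
  let ?\<sigma> = "slocc_out 2 (a * b) 1 (\<lambda>_ _. parity_kraus a b) (depol_all p 2 (proj bell))"
  let ?P = "2 * \<alpha> + 2 * \<beta> + 2 * \<gamma>"
  have tr: "trace_op 2 ?\<sigma> = complex_of_real (8 * (?P ^ a + (2 * \<alpha> + 2 * \<beta> - 2 * \<gamma>) ^ a))"
    by (rule parity_output_trace[OF b entries])
  have ov: "overlap 2 bell ?\<sigma> = complex_of_real (4 * (?P ^ a + (2 * \<alpha> - 2 * \<beta> + 2 * \<gamma>) ^ a))"
    by (rule parity_output_overlap[OF b entries])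
  have fid: "(1 - e) * (8 * (?P ^ a + (2 * \<alpha> + 2 * \<beta> - 2 * \<gamma>) ^ a))
      \<le> 4 * (?P ^ a + (2 * \<alpha> - 2 * \<beta> + 2 * \<gamma>) ^ a)"
    using bounds small_flip large_phase assms(4)
    by (intro parity_fidelity_bound) (simp_all add: \<alpha>_def \<beta>_def \<gamma>_def)
  have pos: "0 < 8 * (?P ^ a + (2 * \<alpha> + 2 * \<beta> - 2 * \<gamma>) ^ a)"
    using bounds by (simp add: add_pos_nonneg)
  show ?thesis
    using fid pos by (intro that[OF a b]) (unfold tr ov, simp_all)
qed

lemma noisy_bell_purifiable:
  assumes "0 \<le> p" and "p \<le> 1" and "1/2 < bell_fidelity p"
  shows "purifiable 2 (depol_all p 2 (proj bell)) bell"
  unfolding purifiable_def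
proof (intro allI impI)
  fix \<epsilon> :: real
  assume "0 < \<epsilon>"
  then obtain a b where "0 < a" and "0 < b"
    and tr: "0 < Re (trace_op 2 (slocc_out 2 (a * b) 1 (\<lambda>_ _. parity_kraus a b) (depol_all p 2 (proj bell))))"
    and fid: "(1 - min \<epsilon> 1) * Re (trace_op 2 (slocc_out 2 (a * b) 1 (\<lambda>_ _. parity_kraus a b) (depol_all p 2 (proj bell))))
      \<le> Re (overlap 2 bell (slocc_out 2 (a * b) 1 (\<lambda>_ _. parity_kraus a b) (depol_all p 2 (proj bell))))"
    using noisy_bell_parity_fidelity[OF assms, of "min \<epsilon> 1"] by auto
  let ?\<sigma> = "slocc_out 2 (a * b) 1 (\<lambda>_ _. parity_kraus a b) (depol_all p 2 (proj bell))"
  have "(1 - \<epsilon>) * Re (trace_op 2 ?\<sigma>) \<le> (1 - min \<epsilon> 1) * Re (trace_op 2 ?\<sigma>)"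
    using tr by (intro mult_right_mono) simp_all
  with fid have "(1 - \<epsilon>) * Re (trace_op 2 ?\<sigma>) \<le> Re (overlap 2 bell ?\<sigma>)"
    by linarith
  with tr \<open>0 < a\<close> \<open>0 < b\<close>
  have "0 < a * b \<and> 0 < Re (trace_op 2 ?\<sigma>) \<and> (1 - \<epsilon>) * Re (trace_op 2 ?\<sigma>) \<le> Re (overlap 2 bell ?\<sigma>)"
    by simp
  then show "\<exists>k m A. 0 < k \<and> 0 < Re (trace_op 2 (slocc_out 2 k m A (depol_all p 2 (proj bell))))
      \<and> (1 - \<epsilon>) * Re (trace_op 2 (slocc_out 2 k m A (depol_all p 2 (proj bell))))
        \<le> Re (overlap 2 bell (slocc_out 2 k m A (depol_all p 2 (proj bell))))"
    by blast
qed

theorem mainTheorem6: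
  fixes p :: real
  assumes "0 \<le> p" and "p \<le> 1"
  shows "(\<forall>\<psi>. is_graph_state path_graph 3 \<psi> \<longrightarrow>
            27 - 126 * p + 156 * p ^ 2 - 64 * p ^ 3 \<le> 0 \<longrightarrow>
            \<not> purifiable 3 (depol_all p 3 (proj \<psi>)) \<psi>)
       \<and> (purifiable 2 (depol_all p 2 (proj bell)) bell \<longleftrightarrow> (1 - p) ^ 2 + p ^ 2 / 3 > 1 / 2)"
  using noisy_cluster_not_purifiable[OF assms] noisy_bell_not_purifiable noisy_bell_purifiable[OF assms]
  unfolding bell_fidelity_def by (meson not_less)

end
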